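(* For every integer $n\ge 1$, let $s(n)$ denote the smallest integer $m$ such that for every $n$-state 1gQFA $Q$ over a finite alphabet $\Sigma$ and every strict cutpoint $\lambda\in[0,1)$ there exist a one-way PFA $P$ over $\Sigma$ with at most $m$ states and a strict cutpoint $\mu\in[0,1)$ with $L(P,\mu)=L(Q,\lambda)$. Then $s(n)=\Theta(n^2)$; that is, the worst-case number of probabilistic states required to simulate an $n$-state 1gQFA exactly under strict cutpoint semantics is $\Theta(n^2)$.
   Context: Let $\Sigma$ be a finite alphabet and $\Sigma^\ast$ the set of finite words over it. Probabilistic computations are written with row vectors; stochastic matrices act on the right. A one-way PFA (probabilistic finite automaton, end-marker model) over $\Sigma$ is a tuple $P=(S,\Sigma,\pi,\{P_\sigma\}_{\sigma\in\Sigma},P_{\#},F)$, where $S$ is a finite state set (its number of states is $|S|$), $\pi$ is an initial probability distribution (row vector) on $S$, each $P_\sigma$ and $P_\#$ are row-stochastic $|S|\times|S|$ matrices, and $F\subseteq S$. For $w=\sigma_1\cdots\sigma_m$, $f_P(w)=\pi P_{\sigma_1}\cdots P_{\sigma_m}P_\#\mathbf 1_F$, where $\mathbf 1_F$ is the indicator column vector of $F$. For $\mu\in[0,1)$, $L(P,\mu)=\{w\in\Sigma^\ast: f_P(w)>\mu\}$. An $n$-state 1gQFA (measure-once one-way general quantum finite automaton) over $\Sigma$ is a tuple $Q=(\mathcal H,\Sigma,\rho_0,\{\mathcal E_\sigma\}_{\sigma\in\Sigma},P_{\mathrm{acc}})$ where $\mathcal H\cong\mathbb C^n$, $\rho_0$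 is a density operator on $\mathcal H$, each $\mathcal E_\sigma$ is a completely positive trace-preserving map on the operators on $\mathcal H$, and $P_{\mathrm{acc}}$ is an orthogonal projector on $\mathcal H$. For $w=\sigma_1\cdots\sigma_m$, $\rho_w=\mathcal E_{\sigma_m}\circ\cdots\circ\mathcal E_{\sigma_1}(\rho_0)$ and $f_Q(w)=\operatorname{Tr}(P_{\mathrm{acc}}\rho_w)$. For $\lambda\in[0,1)$, $L(Q,\lambda)=\{w\in\Sigma^\ast: f_Q(w)>\lambda\}$. *)

theory Defs
  imports Complex_Main "HOL-Library.Landau_Symbols"
begin

text \<open>Alphabets are finite sets of natural numbers (every finite
alphabet is in bijection with one).
A machine with k states / a k-dimensional Hilbert space uses the index set
{0..<k}; vectors are functions nat => _ and matrices are functions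
nat => nat => _, of which only the entries with indices below k matter.\<close>

definition stoch_vec :: "nat \<Rightarrow> (nat \<Rightarrow> real) \<Rightarrow> bool" where
  "stoch_vec k v \<longleftrightarrow> (\<forall>i<k. 0 \<le> v i) \<and> (\<Sum>i<k. v i) = 1"

definition stoch_mat :: "nat \<Rightarrow> (nat \<Rightarrow> nat \<Rightarrow> real) \<Rightarrow> bool" where
  "stoch_mat k M \<longleftrightarrow> (\<forall>i<k. stoch_vec k (M i))"

definition vec_mat :: "nat \<Rightarrow> (nat \<Rightarrow> real) \<Rightarrow> (nat \<Rightarrow> nat \<Rightarrow> real) \<Rightarrow> nat \<Rightarrow> real" where
  "vec_mat k v M = (\<lambda>j. \<Sum>i<k. v i * M i j)"

definition is_pfa :: "nat \<Rightarrow> nat set \<Rightarrow> (nat \<Rightarrow> real) \<Rightarrow> (nat \<Rightarrow> nat \<Rightarrow> nat \<Rightarrow> real)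
    \<Rightarrow> (nat \<Rightarrow> nat \<Rightarrow> real) \<Rightarrow> nat set \<Rightarrow> bool" where
  "is_pfa k Alph ini T Te F \<longleftrightarrow>
     stoch_vec k ini \<and> (\<forall>\<sigma>\<in>Alph. stoch_mat k (T \<sigma>)) \<and> stoch_mat k Te \<and> F \<subseteq> {..<k}"

definition pfa_prob :: "nat \<Rightarrow> (nat \<Rightarrow> real) \<Rightarrow> (nat \<Rightarrow> nat \<Rightarrow> nat \<Rightarrow> real)
    \<Rightarrow> (nat \<Rightarrow> nat \<Rightarrow> real) \<Rightarrow> nat set \<Rightarrow> nat list \<Rightarrow> real" where
  "pfa_prob k ini T Te F w =
     (let v = vec_mat k (foldl (\<lambda>u \<sigma>. vec_mat k u (T \<sigma>)) ini w) Te in \<Sum>j\<in>F. v j)"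

definition pfa_lang :: "nat \<Rightarrow> nat set \<Rightarrow> (nat \<Rightarrow> real) \<Rightarrow> (nat \<Rightarrow> nat \<Rightarrow> nat \<Rightarrow> real)
    \<Rightarrow> (nat \<Rightarrow> nat \<Rightarrow> real) \<Rightarrow> nat set \<Rightarrow> real \<Rightarrow> nat list set" where
  "pfa_lang k Alph ini T Te F \<mu> = {w. set w \<subseteq> Alph \<and> pfa_prob k ini T Te F w > \<mu>}"

type_synonym cmat = "nat \<Rightarrow> nat \<Rightarrow> complex"

definition mat_eq :: "nat \<Rightarrow> cmat \<Rightarrow> cmat \<Rightarrow> bool" where
  "mat_eq n A B \<longleftrightarrow> (\<forall>i<n. \<forall>j<n. A i j = B i j)"

definition cmat_mult :: "nat \<Rightarrow> cmat \<Rightarrow> cmat \<Rightarrow> cmat" where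
  "cmat_mult n A B = (\<lambda>i j. \<Sum>l<n. A i l * B l j)"

definition ctrace :: "nat \<Rightarrow> cmat \<Rightarrow> complex" where
  "ctrace n A = (\<Sum>i<n. A i i)"

definition hermitian :: "nat \<Rightarrow> cmat \<Rightarrow> bool" where
  "hermitian n A \<longleftrightarrow> (\<forall>i<n. \<forall>j<n. A i j = cnj (A j i))"

definition psd :: "nat \<Rightarrow> cmat \<Rightarrow> bool" where
  "psd n A \<longleftrightarrow> (\<forall>x :: nat \<Rightarrow> complex.
      let q = (\<Sum>i<n. \<Sum>j<n. cnj (x i) * A i j * x j) in Im q = 0 \<and> 0 \<le> Re q)"

definition density :: "nat \<Rightarrow> cmat \<Rightarrow> bool" where
  "density n \<rho> \<longleftrightarrow> psd n \<rho> \<and> ctrace n \<rho> = 1"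

definition projector :: "nat \<Rightarrow> cmat \<Rightarrow> bool" where
  "projector n P \<longleftrightarrow> hermitian n P \<and> mat_eq n (cmat_mult n P P) P"

text \<open>The ampliation id_m (x) E acting on an (m*n)x(m*n) matrix, where index
a corresponds to the pair (a div n, a mod n) in {0..<m} x {0..<n}.\<close>
definition ampl :: "nat \<Rightarrow> (cmat \<Rightarrow> cmat) \<Rightarrow> cmat \<Rightarrow> cmat" where
  "ampl n E X = (\<lambda>a b. E (\<lambda>i j. X ((a div n) * n + i) ((b div n) * n + j)) (a mod n) (b mod n))"

definition cptp :: "nat \<Rightarrow> (cmat \<Rightarrow> cmat) \<Rightarrow> bool" where
  "cptp n E \<longleftrightarrow>
     (\<forall>A B. mat_eq n A B \<longrightarrow> mat_eq n (E A) (E B)) \<and>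
     (\<forall>c A B. mat_eq n (E (\<lambda>i j. c * A i j + B i j)) (\<lambda>i j. c * E A i j + E B i j)) \<and>
     (\<forall>m X. psd (m * n) X \<longrightarrow> psd (m * n) (ampl n E X)) \<and>
     (\<forall>A. ctrace n (E A) = ctrace n A)"

definition is_gqfa :: "nat \<Rightarrow> nat set \<Rightarrow> cmat \<Rightarrow> (nat \<Rightarrow> cmat \<Rightarrow> cmat) \<Rightarrow> cmat \<Rightarrow> bool" where
  "is_gqfa n Alph \<rho>0 E Pacc \<longleftrightarrow>
     density n \<rho>0 \<and> (\<forall>\<sigma>\<in>Alph. cptp n (E \<sigma>)) \<and> projector n Pacc"

definition gqfa_prob :: "nat \<Rightarrow> cmat \<Rightarrow> (nat \<Rightarrow> cmat \<Rightarrow> cmat) \<Rightarrow> cmat \<Rightarrow> nat list \<Rightarrow> real" where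
  "gqfa_prob n \<rho>0 E Pacc w =
     Re (ctrace n (cmat_mult n Pacc (foldl (\<lambda>\<rho> \<sigma>. E \<sigma> \<rho>) \<rho>0 w)))"

definition gqfa_lang :: "nat \<Rightarrow> nat set \<Rightarrow> cmat \<Rightarrow> (nat \<Rightarrow> cmat \<Rightarrow> cmat) \<Rightarrow> cmat \<Rightarrow> real \<Rightarrow> nat list set" where
  "gqfa_lang n Alph \<rho>0 E Pacc lam = {w. set w \<subseteq> Alph \<and> gqfa_prob n \<rho>0 E Pacc w > lam}"

definition simulates_all :: "nat \<Rightarrow> nat \<Rightarrow> bool" where
  "simulates_all n m \<longleftrightarrow>
     (\<forall>Alph \<rho>0 E Pacc lam. finite Alph \<and> is_gqfa n Alph \<rho>0 E Pacc \<and> 0 \<le> lam \<and> lam < 1 \<longrightarrow>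
        (\<exists>k ini T Te F \<mu>. k \<le> m \<and> is_pfa k Alph ini T Te F \<and> 0 \<le> \<mu> \<and> \<mu> < 1 \<and>
            pfa_lang k Alph ini T Te F \<mu> = gqfa_lang n Alph \<rho>0 E Pacc lam))"

definition s_cost :: "nat \<Rightarrow> nat" where
  "s_cost n = (LEAST m. simulates_all n m)"

end

theory Submission
  imports Defs
begin

text \<open>
The \<open>2n\<^sup>2\<close> real and imaginary parts of the density matrix evolve linearly
under the channels, and \<open>f\<^sub>Q(w) - \<lambda>\<close> is a linear functional of them because the trace
stays 1. Turakainen's construction realises any \<open>d\<close>-dimensional linear automaton with
cutpoint 0 by a PFA with \<open>d + 2\<close> states: border the matrices so that all row and column sums
vanish, add a small multiple of them to the uniform stochastic matrix, and read the
functional off with a two-state end-marker.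

For a set \<open>I\<close> of pairs \<open>a < b < n\<close>, a letter for \<open>S \<subseteq> I\<close> replaces the state by
\<open>\<rho>\<^sub>S\<close> with diagonal \<open>1/n\<close> and entry \<open>(a, b)\<close> equal to \<open>\<plusminus>1/n\<^sup>2\<close> according to whether
\<open>(a, b) \<in> S\<close>; a letter for \<open>(a, b)\<close> then accepts with probability \<open>1/n \<plusminus> 1/n\<^sup>2\<close>. For a PFA
with \<open>k\<close> states, acceptance of such a two-letter word is the sign of an inner product
\<open>\<langle>\<alpha>\<^sub>S, \<beta>\<^sub>p\<rangle>\<close> in \<open>\<real>\<^sup>k\<close>. If \<open>|I| > k\<close>, a nontrivial relation \<open>\<Sum> c\<^sub>p \<beta>\<^sub>p = 0\<close> contradicts the
sign pattern \<open>S = {p. c\<^sub>p > 0}\<close>. The choice \<open>I = {(a, b). a < n/2 \<le> b}\<close> gives \<open>k \<ge> n\<^sup>2/8\<close>.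
\<close>

section \<open>Linear automata and Turakainen's construction\<close>

definition vec_run :: "nat \<Rightarrow> (nat \<Rightarrow> nat \<Rightarrow> nat \<Rightarrow> real) \<Rightarrow> (nat \<Rightarrow> real) \<Rightarrow> nat list \<Rightarrow> nat \<Rightarrow> real" where
  "vec_run k T u w = foldl (\<lambda>u \<sigma>. vec_mat k u (T \<sigma>)) u w"

lemma vec_run_Nil [simp]: "vec_run k T u [] = u"
  by (simp add: vec_run_def)

lemma vec_run_Cons [simp]: "vec_run k T u (\<sigma> # w) = vec_run k T (vec_mat k u (T \<sigma>)) w"
  by (simp add: vec_run_def)

lemma vec_run_snoc: "vec_run k T u (w @ [\<sigma>]) = vec_mat k (vec_run k T u w) (T \<sigma>)"
  by (simp add: vec_run_def)

lemma pfa_prob_vec_run: "pfa_prob k ini T Te F w = (\<Sum>j\<in>F. vec_mat k (vec_run k T ini w) Te j)"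
  by (simp add: pfa_prob_def vec_run_def)

lemma vec_mat_cong: "(\<And>i. i < k \<Longrightarrow> u i = v i) \<Longrightarrow> vec_mat k u M = vec_mat k v M"
  unfolding vec_mat_def by (auto intro!: sum.cong)

lemma vec_run_cong:
  assumes "\<And>i. i < k \<Longrightarrow> u i = v i" "i < k"
  shows "vec_run k T u w i = vec_run k T v w i"
proof (cases w)
  case Nil then show ?thesis using assms by simp
next
  case (Cons \<sigma> w')
  then show ?thesis using vec_mat_cong[of k u v "T \<sigma>", OF assms(1)] by simp
qed

lemma sum_vec_mat: "(\<Sum>j<k. vec_mat k y M j) = (\<Sum>i<k. y i * (\<Sum>j<k. M i j))"
  unfolding vec_mat_def sum_distrib_left by (rule sum.swap)

lemma sum_vec_run_eq_0:
  assumes "\<And>\<sigma> i. i < k \<Longrightarrow> (\<Sum>j<k. T \<sigma> i j) = 0" "(\<Sum>i<k. y i) = 0"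
  shows "(\<Sum>i<k. vec_run k T y w i) = 0"
  using assms(2)
proof (induction w arbitrary: y)
  case (Cons \<sigma> w)
  have "(\<Sum>j<k. vec_mat k y (T \<sigma>) j) = 0" by (simp add: sum_vec_mat assms(1))
  then show ?case using Cons.IH by simp
qed simp

lemma vec_run_affine:
  assumes k: "0 < k"
    and rows: "\<And>\<sigma> i. i < k \<Longrightarrow> (\<Sum>j<k. B \<sigma> i j) = 0"
    and cols: "\<And>\<sigma> j. (\<Sum>i<k. B \<sigma> i j) = 0"
    and y: "(\<Sum>i<k. y i) = 0"
  shows "vec_run k (\<lambda>\<sigma> i j. e * B \<sigma> i j + 1 / real k) (\<lambda>j. 1 / real k + c * y j) w
       = (\<lambda>j. 1 / real k + c * e ^ length w * vec_run k B y w j)"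
  using y
proof (induction w arbitrary: c y)
  case (Cons \<sigma> w)
  let ?a = "1 / real k"
  have step: "vec_mat k (\<lambda>j. ?a + c * y j) (\<lambda>i j. e * B \<sigma> i j + ?a)
            = (\<lambda>j. ?a + (c * e) * vec_mat k y (B \<sigma>) j)"
  proof
    fix j
    have "vec_mat k (\<lambda>j. ?a + c * y j) (\<lambda>i j. e * B \<sigma> i j + ?a) j
        = ?a * e * (\<Sum>i<k. B \<sigma> i j) + real k * (?a * ?a) + c * e * vec_mat k y (B \<sigma>) j
          + c * ?a * (\<Sum>i<k. y i)"
      unfolding vec_mat_def by (simp add: algebra_simps sum.distrib sum_distrib_left sum_divide_distrib)
    also have "\<dots> = ?a + c * e * vec_mat k y (B \<sigma>) j"
      using k by (simp add: cols Cons.prems)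
    finally show "vec_mat k (\<lambda>j. ?a + c * y j) (\<lambda>i j. e * B \<sigma> i j + ?a) j
        = ?a + (c * e) * vec_mat k y (B \<sigma>) j" by simp
  qed
  have "(\<Sum>j<k. vec_mat k y (B \<sigma>) j) = 0" by (simp add: sum_vec_mat rows)
  from Cons.IH[OF this, of "c * e"] show ?case by (simp add: step mult.assoc)
qed simp

lemma exists_scale_below:
  fixes f :: "'a \<Rightarrow> real"
  assumes "finite I" "0 < a"
  shows "\<exists>\<delta>>0. \<forall>i\<in>I. \<delta> * \<bar>f i\<bar> < a"
proof (intro exI conjI ballI)
  define S where "S = 1 + (\<Sum>i\<in>I. \<bar>f i\<bar>)"
  have "0 < S" by (simp add: S_def add_pos_nonneg sum_nonneg)
  then show "0 < a / S" using assms(2) by simp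
  fix i assume "i \<in> I"
  then have "\<bar>f i\<bar> < S"
    using member_le_sum[of i I "\<lambda>i. \<bar>f i\<bar>"] assms(1) by (simp add: S_def)
  then show "a / S * \<bar>f i\<bar> < a"
    using \<open>0 < S\<close> assms(2) by (simp add: field_simps)
qed

lemma stoch_vec_uniform_perturbation:
  assumes "0 < k" "(\<Sum>i<k. y i) = 0" "0 \<le> \<delta>" "\<And>i. i < k \<Longrightarrow> \<delta> * \<bar>y i\<bar> < 1 / real k"
  shows "stoch_vec k (\<lambda>i. 1 / real k + \<delta> * y i)"
proof -
  have "\<bar>\<delta> * y i\<bar> < 1 / real k" if "i < k" for i
    using assms(4)[OF that] assms(3) by (simp add: abs_mult)
  moreover have "(\<Sum>i<k. 1 / real k + \<delta> * y i) = 1"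
    using assms(1,2) by (simp add: sum.distrib sum_distrib_left[symmetric])
  ultimately show ?thesis by (force simp: stoch_vec_def)
qed

lemma exists_stochastic_affine_run:
  assumes "finite Alph" "0 < k"
    and rows: "\<And>\<sigma> i. i < k \<Longrightarrow> (\<Sum>j<k. B \<sigma> i j) = 0"
    and cols: "\<And>\<sigma> j. (\<Sum>i<k. B \<sigma> i j) = 0"
    and y0: "(\<Sum>i<k. y0 i) = 0"
  shows "\<exists>ini T. stoch_vec k ini \<and> (\<forall>\<sigma>\<in>Alph. stoch_mat k (T \<sigma>)) \<and>
    (\<forall>w. \<exists>c>0. vec_run k T ini w = (\<lambda>j. 1 / real k + c * vec_run k B y0 w j))"
proof -
  define a where "a = 1 / real k"
  have "0 < a" using assms(2) by (simp add: a_def)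
  obtain \<delta> where \<delta>: "0 < \<delta>" "\<And>i. i < k \<Longrightarrow> \<delta> * \<bar>y0 i\<bar> < a"
    using exists_scale_below[of "{..<k}" a y0] \<open>0 < a\<close> by auto
  obtain \<epsilon> where \<epsilon>: "0 < \<epsilon>" "\<And>\<sigma> i j. \<sigma> \<in> Alph \<Longrightarrow> i < k \<Longrightarrow> j < k \<Longrightarrow> \<epsilon> * \<bar>B \<sigma> i j\<bar> < a"
    using exists_scale_below[of "Alph \<times> {..<k} \<times> {..<k}" a "\<lambda>(\<sigma>, i, j). B \<sigma> i j"]
      \<open>0 < a\<close> assms(1) by auto
  define ini where "ini = (\<lambda>j. a + \<delta> * y0 j)"
  define T where "T = (\<lambda>\<sigma> i j. \<epsilon> * B \<sigma> i j + a)"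
  have "stoch_vec k ini"
    unfolding ini_def a_def
    by (rule stoch_vec_uniform_perturbation) (use y0 \<delta> assms(2) in \<open>auto simp: a_def\<close>)
  moreover have "stoch_mat k (T \<sigma>)" if "\<sigma> \<in> Alph" for \<sigma>
    unfolding stoch_mat_def
  proof (intro allI impI)
    fix i assume "i < k"
    have "stoch_vec k (\<lambda>j. 1 / real k + \<epsilon> * B \<sigma> i j)"
      by (rule stoch_vec_uniform_perturbation)
        (use \<epsilon> that \<open>i < k\<close> assms(2) in \<open>auto simp: a_def rows\<close>)
    then show "stoch_vec k (T \<sigma> i)" by (simp add: T_def a_def add.commute)
  qed
  moreover have "vec_run k T ini w = (\<lambda>j. 1 / real k + \<delta> * \<epsilon> ^ length w * vec_run k B y0 w j)" for w
    unfolding T_def ini_def a_def by (rule vec_run_affine[OF assms(2) rows cols y0])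
  moreover have "0 < \<delta> * \<epsilon> ^ length w" for w :: "nat list"
    using \<delta>(1) \<epsilon>(1) by simp
  ultimately show ?thesis by blast
qed

text \<open>Row \<open>d\<close> and column \<open>d + 1\<close> vanish, so the first \<open>d\<close> coordinates of a vector that
  vanishes at \<open>d + 1\<close> evolve under \<open>M\<close>; the other border entries make all row and column
  sums zero.\<close>

definition zero_sum_border :: "nat \<Rightarrow> (nat \<Rightarrow> nat \<Rightarrow> real) \<Rightarrow> nat \<Rightarrow> nat \<Rightarrow> real" where
  "zero_sum_border d M i j =
     (if i < d \<and> j < d then M i j
      else if i < d \<and> j = d then - (\<Sum>l<d. M i l)
      else if i = Suc d \<and> j < d then - (\<Sum>l<d. M l j)
      else if i = Suc d \<and> j = d then (\<Sum>l<d. \<Sum>m<d. M l m)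
      else 0)"

lemma zero_sum_border_row: "(\<Sum>j<Suc (Suc d). zero_sum_border d M i j) = 0"
proof -
  have "(\<Sum>j<d. zero_sum_border d M (Suc d) j) = - (\<Sum>l<d. \<Sum>m<d. M l m)"
    by (simp add: zero_sum_border_def sum_negf sum.swap[of "\<lambda>j l. M l j"])
  moreover have "i < d \<Longrightarrow> (\<Sum>j<d. zero_sum_border d M i j) = (\<Sum>j<d. M i j)"
    by (simp add: zero_sum_border_def)
  ultimately show ?thesis by (auto simp: zero_sum_border_def)
qed

lemma zero_sum_border_col: "(\<Sum>i<Suc (Suc d). zero_sum_border d M i j) = 0"
proof -
  have "(\<Sum>i<d. zero_sum_border d M i d) = - (\<Sum>l<d. \<Sum>m<d. M l m)"
    by (simp add: zero_sum_border_def sum_negf)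
  moreover have "j < d \<Longrightarrow> (\<Sum>i<d. zero_sum_border d M i j) = (\<Sum>i<d. M i j)"
    by (simp add: zero_sum_border_def)
  ultimately show ?thesis by (auto simp: zero_sum_border_def)
qed

lemma vec_run_zero_sum_border:
  assumes "y (Suc d) = 0"
  shows "vec_run (Suc (Suc d)) (\<lambda>\<sigma>. zero_sum_border d (A \<sigma>)) y w (Suc d) = 0 \<and>
    (\<forall>s<d. vec_run (Suc (Suc d)) (\<lambda>\<sigma>. zero_sum_border d (A \<sigma>)) y w s = vec_run d A y w s)"
  using assms
proof (induction w arbitrary: y)
  case (Cons \<sigma> w)
  let ?y' = "vec_mat (Suc (Suc d)) y (zero_sum_border d (A \<sigma>))"
  have "?y' (Suc d) = 0"
    by (auto simp: vec_mat_def zero_sum_border_def intro!: sum.neutral)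
  note IH = Cons.IH[of ?y', OF this]
  have "?y' s = vec_mat d y (A \<sigma>) s" if "s < d" for s
    using that Cons.prems by (simp add: vec_mat_def zero_sum_border_def)
  then have "vec_run d A ?y' w s = vec_run d A (vec_mat d y (A \<sigma>)) w s" if "s < d" for s
    using that by (rule vec_run_cong)
  then show ?case using IH by simp
qed simp

definition zero_sum_extension :: "nat \<Rightarrow> (nat \<Rightarrow> real) \<Rightarrow> nat \<Rightarrow> real" where
  "zero_sum_extension d x j = (if j < d then x j else if j = d then - (\<Sum>i<d. x i) else 0)"

lemma sum_zero_sum_extension: "(\<Sum>i<Suc (Suc d). zero_sum_extension d x i) = 0"
  by (simp add: zero_sum_extension_def)

lemma vec_run_zero_sum_extension:
  assumes "s < d"
  shows "vec_run (Suc (Suc d)) (\<lambda>\<sigma>. zero_sum_border d (A \<sigma>)) (zero_sum_extension d x) w s = vec_run d A x w s"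
proof -
  have "vec_run (Suc (Suc d)) (\<lambda>\<sigma>. zero_sum_border d (A \<sigma>)) (zero_sum_extension d x) w s
      = vec_run d A (zero_sum_extension d x) w s"
    using vec_run_zero_sum_border[of "zero_sum_extension d x" d A w] assms
    by (simp add: zero_sum_extension_def)
  also have "\<dots> = vec_run d A x w s"
    using assms by (intro vec_run_cong) (simp_all add: zero_sum_extension_def)
  finally show ?thesis .
qed

lemma exists_end_marker:
  fixes \<eta> :: "nat \<Rightarrow> real"
  shows "\<exists>Te \<mu> \<theta>. stoch_mat (Suc (Suc d)) Te \<and> 0 \<le> \<mu> \<and> \<mu> < 1 \<and> 0 < \<theta> \<and>
    (\<forall>c y. (\<Sum>i<Suc (Suc d). y i) = 0 \<longrightarrow>
       vec_mat (Suc (Suc d)) (\<lambda>j. 1 / real (Suc (Suc d)) + c * y j) Te d = \<mu> + c * \<theta> * (\<Sum>i<d. y i * \<eta> i))"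
proof -
  define D where "D = Suc (Suc d)"
  obtain \<theta> where \<theta>: "0 < \<theta>" "\<And>i. i < d \<Longrightarrow> \<theta> * \<bar>\<eta> i\<bar> < 1 / 2"
    using exists_scale_below[of "{..<d}" "1 / 2" \<eta>] by auto
  define h where "h i = (if i < d then 1 / 2 + \<theta> * \<eta> i else 1 / 2)" for i
  define Te where "Te i j = (if j = d then h i else if j = Suc d then 1 - h i else 0)" for i j
  define \<mu> where "\<mu> = (\<Sum>i<D. h i) / real D"
  have h: "0 \<le> h i \<and> h i < 1" for i
  proof (cases "i < d")
    case True
    then have "\<bar>\<theta> * \<eta> i\<bar> < 1 / 2" using \<theta> by (simp add: abs_mult)
    then show ?thesis using True by (simp add: h_def abs_less_iff) linarith
  qed (simp add: h_def)
  have "stoch_mat D Te"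
    using h by (simp add: stoch_mat_def stoch_vec_def Te_def D_def less_imp_le)
  moreover have "0 \<le> \<mu> \<and> \<mu> < 1"
  proof -
    have "(\<Sum>i<D. h i) < (\<Sum>i<D. 1)" by (rule sum_strict_mono) (auto simp: h D_def)
    then show ?thesis using h by (simp add: \<mu>_def D_def sum_nonneg)
  qed
  moreover have "vec_mat D (\<lambda>j. 1 / real D + c * y j) Te d = \<mu> + c * \<theta> * (\<Sum>i<d. y i * \<eta> i)"
    if "(\<Sum>i<D. y i) = 0" for c y
  proof -
    have "(\<Sum>i<D. y i * h i) = (\<Sum>i<D. y i) / 2 + \<theta> * (\<Sum>i<d. y i * \<eta> i)"
      by (simp add: h_def D_def algebra_simps sum.distrib sum_distrib_left flip: sum_divide_distrib)
    moreover have "vec_mat D (\<lambda>j. 1 / real D + c * y j) Te d = \<mu> + c * (\<Sum>i<D. y i * h i)"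
      by (simp add: vec_mat_def Te_def \<mu>_def distrib_right sum.distrib sum_distrib_left mult.assoc
          sum_divide_distrib)
    ultimately show ?thesis using that by simp
  qed
  ultimately show ?thesis using \<theta>(1) unfolding D_def by blast
qed

theorem turakainen:
  assumes "finite Alph"
  shows "\<exists>ini T Te F \<mu>. is_pfa (Suc (Suc d)) Alph ini T Te F \<and> 0 \<le> \<mu> \<and> \<mu> < 1 \<and>
     (\<forall>w. pfa_prob (Suc (Suc d)) ini T Te F w > \<mu> \<longleftrightarrow> (\<Sum>s<d. vec_run d A x0 w s * \<eta> s) > 0)"
proof -
  define D where "D = Suc (Suc d)"
  define B where "B = (\<lambda>\<sigma>. zero_sum_border d (A \<sigma>))"
  define y0 where "y0 = zero_sum_extension d x0"
  have B_row: "(\<Sum>j<D. B \<sigma> i j) = 0" and B_col: "(\<Sum>i<D. B \<sigma> i j) = 0" for \<sigma> i j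
    unfolding D_def B_def by (rule zero_sum_border_row, rule zero_sum_border_col)
  have y0_sum: "(\<Sum>i<D. y0 i) = 0"
    unfolding D_def y0_def by (rule sum_zero_sum_extension)
  obtain ini T where stoch: "stoch_vec D ini" "\<forall>\<sigma>\<in>Alph. stoch_mat D (T \<sigma>)"
    and run: "\<forall>w. \<exists>c>0. vec_run D T ini w = (\<lambda>j. 1 / real D + c * vec_run D B y0 w j)"
    using exists_stochastic_affine_run[of Alph D B y0, OF assms _ B_row B_col y0_sum] by (auto simp: D_def)
  obtain Te \<mu> \<theta> where "stoch_mat D Te" "0 \<le> \<mu>" "\<mu> < 1" "0 < \<theta>"
    and Te: "\<And>c y. (\<Sum>i<D. y i) = 0 \<Longrightarrow>
      vec_mat D (\<lambda>j. 1 / real D + c * y j) Te d = \<mu> + c * \<theta> * (\<Sum>i<d. y i * \<eta> i)"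
    using exists_end_marker[of d \<eta>] unfolding D_def by blast
  have "pfa_prob D ini T Te {d} w > \<mu> \<longleftrightarrow> (\<Sum>s<d. vec_run d A x0 w s * \<eta> s) > 0" for w
  proof -
    obtain c where "0 < c" and c: "vec_run D T ini w = (\<lambda>j. 1 / real D + c * vec_run D B y0 w j)"
      using run by blast
    have "(\<Sum>i<D. vec_run D B y0 w i) = 0"
      by (rule sum_vec_run_eq_0[OF _ y0_sum]) (simp add: B_row)
    then have "pfa_prob D ini T Te {d} w = \<mu> + c * \<theta> * (\<Sum>i<d. vec_run D B y0 w i * \<eta> i)"
      by (simp add: pfa_prob_vec_run c Te)
    also have "(\<Sum>i<d. vec_run D B y0 w i * \<eta> i) = (\<Sum>s<d. vec_run d A x0 w s * \<eta> s)"
      using vec_run_zero_sum_extension[of _ d A x0 w] by (simp add: D_def B_def y0_def)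
    finally show ?thesis using \<open>0 < c\<close> \<open>0 < \<theta>\<close> by (simp add: zero_less_mult_iff mult_less_0_iff)
  qed
  moreover have "is_pfa D Alph ini T Te {d}"
    using stoch \<open>stoch_mat D Te\<close> by (simp add: is_pfa_def D_def)
  ultimately show ?thesis using \<open>0 \<le> \<mu>\<close> \<open>\<mu> < 1\<close> unfolding D_def by blast
qed

section \<open>Real coordinates of a 1gQFA\<close>

text \<open>Coordinates \<open>2(i n + j)\<close> and \<open>2(i n + j) + 1\<close> are the real and imaginary part of
  entry \<open>(i, j)\<close>.\<close>

definition cmat_coord :: "nat \<Rightarrow> cmat \<Rightarrow> nat \<Rightarrow> real" where
  "cmat_coord n X r = (if even r then Re (X ((r div 2) div n) ((r div 2) mod n))
                       else Im (X ((r div 2) div n) ((r div 2) mod n)))"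

definition cmat_unit :: "nat \<Rightarrow> nat \<Rightarrow> cmat" where
  "cmat_unit n r = (\<lambda>i j. if i = (r div 2) div n \<and> j = (r div 2) mod n then (if even r then 1 else \<i>) else 0)"

lemma cmat_coord_index_bound:
  fixes r n :: nat
  assumes "r < 2 * (n * n)"
  shows "(r div 2) div n < n" "(r div 2) mod n < n"
proof -
  have "r div 2 < n * n" using assms by simp
  then show "(r div 2) div n < n" by (simp add: less_mult_imp_div_less)
  from \<open>r div 2 < n * n\<close> have "0 < n" by (cases n) auto
  then show "(r div 2) mod n < n" by simp
qed

lemma cmat_coord_cong: "r < 2 * (n * n) \<Longrightarrow> mat_eq n X Y \<Longrightarrow> cmat_coord n X r = cmat_coord n Y r"
  using cmat_coord_index_bound[of r n] by (simp add: cmat_coord_def mat_eq_def)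

lemma cmat_coord_sum:
  "cmat_coord n (\<lambda>i j. \<Sum>r\<in>R. complex_of_real (c r) * M r i j) s = (\<Sum>r\<in>R. c r * cmat_coord n (M r) s)"
  by (simp add: cmat_coord_def Re_sum Im_sum)

lemma cmat_coord_expansion:
  assumes "i < n" "j < n"
  shows "X i j = (\<Sum>r<2 * (n * n). complex_of_real (cmat_coord n X r) * cmat_unit n r i j)"
proof -
  define c where "c = i * n + j"
  have "c < n * n"
  proof -
    have "c < (i + 1) * n" using assms(2) by (simp add: c_def)
    also have "\<dots> \<le> n * n" using assms(1) by (intro mult_right_mono) auto
    finally show ?thesis .
  qed
  have at_c: "(i = (r div 2) div n \<and> j = (r div 2) mod n) \<longleftrightarrow> r = 2 * c \<or> r = 2 * c + 1" for r
  proof -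
    have "(i = (r div 2) div n \<and> j = (r div 2) mod n) \<longleftrightarrow> r div 2 = c"
      using assms by (auto simp: c_def)
    also have "\<dots> \<longleftrightarrow> r = 2 * c \<or> r = 2 * c + 1" by presburger
    finally show ?thesis .
  qed
  have "complex_of_real (cmat_coord n X r) * cmat_unit n r i j
      = (if r = 2 * c then complex_of_real (Re (X i j)) else 0)
      + (if r = 2 * c + 1 then complex_of_real (Im (X i j)) * \<i> else 0)" for r
    using at_c[of r] assms by (auto simp: cmat_coord_def cmat_unit_def c_def)
  then have "(\<Sum>r<2 * (n * n). complex_of_real (cmat_coord n X r) * cmat_unit n r i j)
      = complex_of_real (Re (X i j)) + complex_of_real (Im (X i j)) * \<i>"
    using \<open>c < n * n\<close> by (simp add: sum.distrib)
  also have "\<dots> = X i j" by (simp add: complex_eq_iff)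
  finally show ?thesis by simp
qed

lemma cptp_sum:
  assumes "cptp n E" "finite R"
  shows "mat_eq n (E (\<lambda>i j. \<Sum>r\<in>R. c r * M r i j)) (\<lambda>i j. \<Sum>r\<in>R. c r * E (M r) i j)"
  using assms(2)
proof (induction R rule: finite_induct)
  have lin: "mat_eq n (E (\<lambda>i j. c * A i j + B i j)) (\<lambda>i j. c * E A i j + E B i j)" for c A B
    using assms(1) by (simp add: cptp_def)
  { case empty
    show ?case using lin[of 1 "\<lambda>i j. 0" "\<lambda>i j. 0"] by (simp add: mat_eq_def) }
  { case (insert x R)
    then show ?case using lin[of "c x" "M x" "\<lambda>i j. \<Sum>r\<in>R. c r * M r i j"] by (simp add: mat_eq_def) }
qed

definition channel_coord_matrix :: "nat \<Rightarrow> (nat \<Rightarrow> cmat \<Rightarrow> cmat) \<Rightarrow> nat \<Rightarrow> nat \<Rightarrow> nat \<Rightarrow> real" where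
  "channel_coord_matrix n E \<sigma> r s = cmat_coord n (E \<sigma> (cmat_unit n r)) s"

lemma cmat_coord_cptp:
  assumes "cptp n E" "s < 2 * (n * n)"
  shows "cmat_coord n (E X) s = (\<Sum>r<2 * (n * n). cmat_coord n X r * cmat_coord n (E (cmat_unit n r)) s)"
proof -
  let ?X' = "\<lambda>i j. \<Sum>r<2 * (n * n). complex_of_real (cmat_coord n X r) * cmat_unit n r i j"
  have "mat_eq n X ?X'"
    unfolding mat_eq_def using cmat_coord_expansion[of _ n _ X] by blast
  then have "mat_eq n (E X) (E ?X')"
    using assms(1) unfolding cptp_def by blast
  moreover have "mat_eq n (E ?X') (\<lambda>i j. \<Sum>r<2 * (n * n). complex_of_real (cmat_coord n X r) * E (cmat_unit n r) i j)"
    by (rule cptp_sum[OF assms(1)]) simp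
  ultimately have "cmat_coord n (E X) s
      = cmat_coord n (\<lambda>i j. \<Sum>r<2 * (n * n). complex_of_real (cmat_coord n X r) * E (cmat_unit n r) i j) s"
    using assms(2) by (intro cmat_coord_cong) (auto simp: mat_eq_def)
  then show ?thesis by (simp add: cmat_coord_sum)
qed

lemma cmat_coord_run:
  assumes "\<forall>\<sigma>\<in>Alph. cptp n (E \<sigma>)" "set w \<subseteq> Alph" "s < 2 * (n * n)"
  shows "cmat_coord n (foldl (\<lambda>\<rho> \<sigma>. E \<sigma> \<rho>) \<rho>0 w) s
       = vec_run (2 * (n * n)) (channel_coord_matrix n E) (cmat_coord n \<rho>0) w s"
  using assms(2,3)
proof (induction w arbitrary: s rule: rev_induct)
  case (snoc \<sigma> w)
  then have "cmat_coord n (E \<sigma> (foldl (\<lambda>\<rho> \<sigma>. E \<sigma> \<rho>) \<rho>0 w)) s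
      = (\<Sum>r<2 * (n * n). cmat_coord n (foldl (\<lambda>\<rho> \<sigma>. E \<sigma> \<rho>) \<rho>0 w) r * channel_coord_matrix n E \<sigma> r s)"
    using assms(1) by (simp add: cmat_coord_cptp channel_coord_matrix_def)
  also have "\<dots> = (\<Sum>r<2 * (n * n). vec_run (2 * (n * n)) (channel_coord_matrix n E) (cmat_coord n \<rho>0) w r
                    * channel_coord_matrix n E \<sigma> r s)"
    using snoc by (intro sum.cong) auto
  finally show ?case by (simp add: vec_run_snoc vec_mat_def)
qed simp

lemma ctrace_run:
  assumes "\<forall>\<sigma>\<in>Alph. cptp n (E \<sigma>)" "set w \<subseteq> Alph"
  shows "ctrace n (foldl (\<lambda>\<rho> \<sigma>. E \<sigma> \<rho>) \<rho>0 w) = ctrace n \<rho>0"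
  using assms(2)
proof (induction w rule: rev_induct)
  case (snoc \<sigma> w)
  then show ?case using assms(1) by (simp add: cptp_def)
qed simp

lemma ctrace_coord_expansion:
  "ctrace n X = (\<Sum>r<2 * (n * n). complex_of_real (cmat_coord n X r) * ctrace n (cmat_unit n r))"
proof -
  have "ctrace n X = (\<Sum>i<n. \<Sum>r<2 * (n * n). complex_of_real (cmat_coord n X r) * cmat_unit n r i i)"
    unfolding ctrace_def by (rule sum.cong) (auto intro: cmat_coord_expansion)
  then show ?thesis
    by (simp add: ctrace_def sum_distrib_left sum.swap[of _ "{..<n}"])
qed

lemma ctrace_mult_coord_expansion:
  "ctrace n (cmat_mult n P X)
     = (\<Sum>r<2 * (n * n). complex_of_real (cmat_coord n X r) * ctrace n (cmat_mult n P (cmat_unit n r)))"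
proof -
  have "ctrace n (cmat_mult n P X)
      = (\<Sum>i<n. \<Sum>l<n. \<Sum>r<2 * (n * n). complex_of_real (cmat_coord n X r) * (P i l * cmat_unit n r l i))"
    unfolding ctrace_def cmat_mult_def
    by (intro sum.cong refl) (simp add: cmat_coord_expansion[of _ n _ X] sum_distrib_left mult.left_commute)
  then show ?thesis
    by (simp add: ctrace_def cmat_mult_def sum_distrib_left sum.swap[of _ "{..<n}" "{..<2 * (n * n)}"])
qed

lemma gqfa_prob_minus_cutpoint:
  assumes "is_gqfa n Alph \<rho>0 E Pacc" "set w \<subseteq> Alph"
  shows "gqfa_prob n \<rho>0 E Pacc w - lam =
    (\<Sum>s<2 * (n * n). vec_run (2 * (n * n)) (channel_coord_matrix n E) (cmat_coord n \<rho>0) w s *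
        (Re (ctrace n (cmat_mult n Pacc (cmat_unit n s))) - lam * Re (ctrace n (cmat_unit n s))))"
proof -
  let ?\<rho> = "foldl (\<lambda>\<rho> \<sigma>. E \<sigma> \<rho>) \<rho>0 w"
  have cptp: "\<forall>\<sigma>\<in>Alph. cptp n (E \<sigma>)" using assms(1) by (simp add: is_gqfa_def)
  have "1 = Re (ctrace n ?\<rho>)"
    using ctrace_run[OF cptp assms(2)] assms(1) by (simp add: is_gqfa_def density_def)
  then have "lam = lam * (\<Sum>s<2 * (n * n). cmat_coord n ?\<rho> s * Re (ctrace n (cmat_unit n s)))"
    by (subst (asm) ctrace_coord_expansion) (simp add: Re_sum)
  moreover have "gqfa_prob n \<rho>0 E Pacc w
      = (\<Sum>s<2 * (n * n). cmat_coord n ?\<rho> s * Re (ctrace n (cmat_mult n Pacc (cmat_unit n s))))"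
    unfolding gqfa_prob_def by (subst ctrace_mult_coord_expansion) (simp add: Re_sum)
  ultimately have "gqfa_prob n \<rho>0 E Pacc w - lam = (\<Sum>s<2 * (n * n). cmat_coord n ?\<rho> s *
        (Re (ctrace n (cmat_mult n Pacc (cmat_unit n s))) - lam * Re (ctrace n (cmat_unit n s))))"
    by (simp add: algebra_simps sum_subtractf sum_distrib_left)
  also have "\<dots> = (\<Sum>s<2 * (n * n). vec_run (2 * (n * n)) (channel_coord_matrix n E) (cmat_coord n \<rho>0) w s *
        (Re (ctrace n (cmat_mult n Pacc (cmat_unit n s))) - lam * Re (ctrace n (cmat_unit n s))))"
    by (intro sum.cong refl) (simp add: cmat_coord_run[OF cptp assms(2)])
  finally show ?thesis .
qed

section \<open>Kraus maps\<close>

lemma sum_swap_4: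
  "(\<Sum>a\<in>A. \<Sum>b\<in>B. \<Sum>c\<in>C. \<Sum>e\<in>D. f a b c e) = (\<Sum>c\<in>C. \<Sum>e\<in>D. \<Sum>a\<in>A. \<Sum>b\<in>B. f a b c e)"
proof -
  have "(\<Sum>a\<in>A. \<Sum>b\<in>B. \<Sum>c\<in>C. \<Sum>e\<in>D. f a b c e) = (\<Sum>a\<in>A. \<Sum>c\<in>C. \<Sum>e\<in>D. \<Sum>b\<in>B. f a b c e)"
    by (intro sum.cong refl) (subst sum.swap, intro sum.cong refl, rule sum.swap)
  also have "\<dots> = (\<Sum>c\<in>C. \<Sum>e\<in>D. \<Sum>a\<in>A. \<Sum>b\<in>B. f a b c e)"
    by (subst sum.swap, intro sum.cong refl, rule sum.swap)
  finally show ?thesis .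
qed

definition quad_form :: "nat \<Rightarrow> cmat \<Rightarrow> (nat \<Rightarrow> complex) \<Rightarrow> complex" where
  "quad_form N A x = (\<Sum>i<N. \<Sum>j<N. cnj (x i) * A i j * x j)"

lemma psd_quad_form: "psd N A \<longleftrightarrow> (\<forall>x. Im (quad_form N A x) = 0 \<and> 0 \<le> Re (quad_form N A x))"
  by (simp add: psd_def quad_form_def Let_def)

lemma psd_congruence:
  assumes "psd N X"
  shows "psd N (\<lambda>a b. \<Sum>c<N. \<Sum>e<N. W a c * X c e * cnj (W b e))"
  unfolding psd_quad_form
proof
  fix x
  define y where "y e = (\<Sum>b<N. cnj (W b e) * x b)" for e
  have "quad_form N (\<lambda>a b. \<Sum>c<N. \<Sum>e<N. W a c * X c e * cnj (W b e)) x
      = (\<Sum>a<N. \<Sum>b<N. \<Sum>c<N. \<Sum>e<N. cnj (x a) * W a c * X c e * cnj (W b e) * x b)"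
    unfolding quad_form_def by (simp add: sum_distrib_left sum_distrib_right mult.assoc)
  also have "\<dots> = (\<Sum>c<N. \<Sum>e<N. \<Sum>a<N. \<Sum>b<N. cnj (x a) * W a c * X c e * cnj (W b e) * x b)"
    by (rule sum_swap_4)
  also have "\<dots> = quad_form N X y"
    unfolding quad_form_def y_def
    by (simp add: sum_distrib_left sum_distrib_right mult.assoc mult.left_commute mult.commute)
  finally show "Im (quad_form N (\<lambda>a b. \<Sum>c<N. \<Sum>e<N. W a c * X c e * cnj (W b e)) x) = 0 \<and>
        0 \<le> Re (quad_form N (\<lambda>a b. \<Sum>c<N. \<Sum>e<N. W a c * X c e * cnj (W b e)) x)"
    using assms unfolding psd_quad_form by simp
qed

lemma psd_sum:
  assumes "finite K" "\<And>k. k \<in> K \<Longrightarrow> psd N (M k)"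
  shows "psd N (\<lambda>a b. \<Sum>k\<in>K. M k a b)"
  unfolding psd_quad_form
proof
  fix x
  have "quad_form N (\<lambda>a b. \<Sum>k\<in>K. M k a b) x = (\<Sum>k\<in>K. quad_form N (M k) x)"
    unfolding quad_form_def
    by (simp add: sum_distrib_left sum_distrib_right mult.assoc sum.swap[of _ K "{..<N}"])
  then show "Im (quad_form N (\<lambda>a b. \<Sum>k\<in>K. M k a b) x) = 0 \<and> 0 \<le> Re (quad_form N (\<lambda>a b. \<Sum>k\<in>K. M k a b) x)"
    using assms(2) unfolding psd_quad_form by (simp add: Im_sum Re_sum sum_nonneg)
qed

lemma psd_cong:
  assumes "psd N A" "\<And>a b. a < N \<Longrightarrow> b < N \<Longrightarrow> A a b = B a b"
  shows "psd N B"
proof -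
  have "quad_form N A x = quad_form N B x" for x
    unfolding quad_form_def using assms(2) by (intro sum.cong refl) auto
  then show ?thesis using assms(1) unfolding psd_quad_form by simp
qed

definition kraus_map :: "nat \<Rightarrow> 'k set \<Rightarrow> ('k \<Rightarrow> cmat) \<Rightarrow> cmat \<Rightarrow> cmat" where
  "kraus_map n Ks K X = (\<lambda>x y. \<Sum>k\<in>Ks. \<Sum>p<n. \<Sum>q<n. K k x p * X p q * cnj (K k y q))"

lemma sum_block:
  fixes n m \<alpha> :: nat
  assumes "0 < n" "\<alpha> < m"
  shows "(\<Sum>c<m * n. if c div n = \<alpha> then g c else 0) = (\<Sum>p<n. g (\<alpha> * n + p))"
proof -
  have block: "c div n = \<alpha> \<longleftrightarrow> \<alpha> * n \<le> c \<and> c < Suc \<alpha> * n" for c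
  proof -
    have "c div n = \<alpha> \<longleftrightarrow> \<alpha> \<le> c div n \<and> c div n < Suc \<alpha>" by auto
    also have "\<dots> \<longleftrightarrow> \<alpha> * n \<le> c \<and> c < Suc \<alpha> * n"
      using assms(1) by (simp add: less_eq_div_iff_mult_less_eq div_less_iff_less_mult)
    finally show ?thesis .
  qed
  have "Suc \<alpha> * n \<le> m * n" using assms(2) by (intro mult_right_mono) auto
  then have "{c \<in> {..<m * n}. c div n = \<alpha>} = {0 + \<alpha> * n..<n + \<alpha> * n}"
    by (auto simp: block)
  then have "(\<Sum>c<m * n. if c div n = \<alpha> then g c else 0) = sum g {0 + \<alpha> * n..<n + \<alpha> * n}"
    by (simp add: sum.inter_filter[symmetric])
  also have "\<dots> = (\<Sum>p<n. g (\<alpha> * n + p))"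
    by (simp only: sum.shift_bounds_nat_ivl atLeast0LessThan add.commute)
  finally show ?thesis .
qed

definition block_diag :: "nat \<Rightarrow> cmat \<Rightarrow> cmat" where
  "block_diag n K = (\<lambda>a c. if c div n = a div n then K (a mod n) (c mod n) else 0)"

lemma ampl_kraus_term:
  fixes n m a b :: nat
  assumes "0 < n" "a < m * n" "b < m * n"
  shows "(\<Sum>p<n. \<Sum>q<n. K (a mod n) p * X ((a div n) * n + p) ((b div n) * n + q) * cnj (K (b mod n) q))
       = (\<Sum>c<m * n. \<Sum>e<m * n. block_diag n K a c * X c e * cnj (block_diag n K b e))"
proof -
  have blocks: "a div n < m" "b div n < m" using assms by (auto simp: less_mult_imp_div_less)
  have inner: "(\<Sum>e<m * n. block_diag n K a c * X c e * cnj (block_diag n K b e))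
      = block_diag n K a c * (\<Sum>q<n. X c ((b div n) * n + q) * cnj (K (b mod n) q))" for c
  proof -
    have "(\<Sum>e<m * n. block_diag n K a c * X c e * cnj (block_diag n K b e))
        = block_diag n K a c * (\<Sum>e<m * n. if e div n = b div n then X c e * cnj (K (b mod n) (e mod n)) else 0)"
      unfolding sum_distrib_left by (intro sum.cong) (auto simp: block_diag_def)
    then show ?thesis
      using sum_block[OF assms(1) blocks(2), of "\<lambda>e. X c e * cnj (K (b mod n) (e mod n))"] assms(1)
      by simp
  qed
  have "(\<Sum>c<m * n. \<Sum>e<m * n. block_diag n K a c * X c e * cnj (block_diag n K b e))
      = (\<Sum>c<m * n. if c div n = a div n
           then K (a mod n) (c mod n) * (\<Sum>q<n. X c ((b div n) * n + q) * cnj (K (b mod n) q)) else 0)"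
    by (intro sum.cong refl) (simp only: inner, simp add: block_diag_def)
  also have "\<dots> = (\<Sum>p<n. K (a mod n) ((a div n * n + p) mod n) * (\<Sum>q<n. X ((a div n) * n + p) ((b div n) * n + q) * cnj (K (b mod n) q)))"
    by (rule sum_block[OF assms(1) blocks(1)])
  also have "\<dots> = (\<Sum>p<n. K (a mod n) p * (\<Sum>q<n. X ((a div n) * n + p) ((b div n) * n + q) * cnj (K (b mod n) q)))"
    by (intro sum.cong refl) simp
  finally show ?thesis by (simp add: sum_distrib_left mult.assoc)
qed

lemma psd_ampl_kraus_map:
  assumes "finite Ks" "0 < n" "psd (m * n) X"
  shows "psd (m * n) (ampl n (kraus_map n Ks K) X)"
proof (rule psd_cong)
  show "psd (m * n) (\<lambda>a b. \<Sum>k\<in>Ks. \<Sum>c<m * n. \<Sum>e<m * n. block_diag n (K k) a c * X c e * cnj (block_diag n (K k) b e))"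
    using assms(1,3) by (intro psd_sum psd_congruence)
  show "(\<Sum>k\<in>Ks. \<Sum>c<m * n. \<Sum>e<m * n. block_diag n (K k) a c * X c e * cnj (block_diag n (K k) b e))
      = ampl n (kraus_map n Ks K) X a b" if "a < m * n" "b < m * n" for a b
    unfolding ampl_def kraus_map_def using ampl_kraus_term[OF assms(2) that] by simp
qed

lemma ctrace_kraus_map:
  assumes "\<And>p q. p < n \<Longrightarrow> q < n \<Longrightarrow> (\<Sum>k\<in>Ks. \<Sum>x<n. K k x p * cnj (K k x q)) = (if p = q then 1 else 0)"
  shows "ctrace n (kraus_map n Ks K A) = ctrace n A"
proof -
  have "ctrace n (kraus_map n Ks K A) = (\<Sum>k\<in>Ks. \<Sum>x<n. \<Sum>p<n. \<Sum>q<n. K k x p * A p q * cnj (K k x q))"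
    unfolding ctrace_def kraus_map_def by (rule sum.swap)
  also have "\<dots> = (\<Sum>p<n. \<Sum>q<n. \<Sum>k\<in>Ks. \<Sum>x<n. K k x p * A p q * cnj (K k x q))"
    by (rule sum_swap_4)
  also have "\<dots> = (\<Sum>p<n. \<Sum>q<n. A p q * (\<Sum>k\<in>Ks. \<Sum>x<n. K k x p * cnj (K k x q)))"
    by (simp add: sum_distrib_left mult.commute mult.left_commute)
  also have "\<dots> = (\<Sum>p<n. \<Sum>q<n. if p = q then A p q else 0)"
    using assms by (intro sum.cong refl) simp
  also have "\<dots> = ctrace n A"
    by (simp add: ctrace_def)
  finally show ?thesis .
qed

lemma cptp_kraus_map:
  assumes "finite Ks" "0 < n"
    and "\<And>p q. p < n \<Longrightarrow> q < n \<Longrightarrow> (\<Sum>k\<in>Ks. \<Sum>x<n. K k x p * cnj (K k x q)) = (if p = q then 1 else 0)"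
  shows "cptp n (kraus_map n Ks K)"
  unfolding cptp_def
proof (intro conjI allI impI)
  show "mat_eq n (kraus_map n Ks K A) (kraus_map n Ks K B)" if "mat_eq n A B" for A B
    using that unfolding mat_eq_def kraus_map_def by (auto intro!: sum.cong)
  show "mat_eq n (kraus_map n Ks K (\<lambda>i j. c * A i j + B i j)) (\<lambda>i j. c * kraus_map n Ks K A i j + kraus_map n Ks K B i j)"
    for c A B
    unfolding mat_eq_def kraus_map_def
    by (simp add: sum.distrib sum_distrib_left distrib_left distrib_right mult.assoc mult.left_commute)
  show "psd (m * n) (ampl n (kraus_map n Ks K) X)" if "psd (m * n) X" for m X
    using assms(1,2) that by (rule psd_ampl_kraus_map)
  show "ctrace n (kraus_map n Ks K A) = ctrace n A" for A
    using assms(3) by (rule ctrace_kraus_map)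
qed

section \<open>A 1gQFA separating all subsets of pairs\<close>

definition proj0 :: cmat where
  "proj0 = (\<lambda>i j. if i = 0 \<and> j = 0 then 1 else 0)"

lemma sum_proj0:
  assumes "0 < n"
  shows "(\<Sum>p<n. \<Sum>q<n. f p * proj0 p q * g q) = f 0 * g 0"
proof -
  have "(\<Sum>q<n. f p * proj0 p q * g q) = (if p = 0 then f 0 * g 0 else 0)" for p
    using assms by (simp add: proj0_def if_distrib if_distribR cong: if_cong)
  then show ?thesis using assms by simp
qed

lemma density_proj0:
  assumes "0 < n"
  shows "density n proj0"
proof -
  have "cnj z * z = complex_of_real ((Re z)\<^sup>2 + (Im z)\<^sup>2)" for z
    by (simp add: complex_mult_cnj mult.commute)
  then have "psd n proj0" using assms by (simp add: psd_def sum_proj0)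
  moreover have "ctrace n proj0 = 1" using assms by (simp add: ctrace_def proj0_def)
  ultimately show ?thesis by (simp add: density_def)
qed

lemma proj0_mult_left: "(\<Sum>l<n. proj0 i l * X l j) = (if 0 < n \<and> i = 0 then X 0 j else 0)"
proof -
  have "proj0 i l * X l j = (if l = 0 then (if i = 0 then X 0 j else 0) else 0)" for l
    by (simp add: proj0_def)
  then show ?thesis by simp
qed

lemma projector_proj0: "0 < n \<Longrightarrow> projector n proj0"
  by (simp add: projector_def hermitian_def mat_eq_def cmat_mult_def proj0_mult_left)
    (simp add: proj0_def)

lemma ctrace_mult_proj0: "0 < n \<Longrightarrow> ctrace n (cmat_mult n proj0 X) = X 0 0"
  by (simp add: ctrace_def cmat_mult_def proj0_mult_left)

definition pair_sign :: "(nat \<times> nat) set \<Rightarrow> nat \<Rightarrow> nat \<Rightarrow> complex" where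
  "pair_sign S i j = (if (min i j, max i j) \<in> S then 1 else -1)"

text \<open>The diagonal entry \<open>1 + \<i>\<close> only serves to give every \<open>pair_vec\<close> squared norm 2.\<close>

definition pair_vec :: "(nat \<times> nat) set \<Rightarrow> nat \<Rightarrow> nat \<Rightarrow> nat \<Rightarrow> complex" where
  "pair_vec S i j x = (if i = j then (if x = i then 1 + \<i> else 0)
                  else if x = i then 1 else if x = j then pair_sign S i j else 0)"

lemma pair_sign_sq: "pair_sign S i j * cnj (pair_sign S i j) = 1"
  by (simp add: pair_sign_def)

lemma pair_sign_sym: "pair_sign S i j = pair_sign S j i"
  by (simp add: pair_sign_def min.commute max.commute)

lemma cnj_pair_sign: "cnj (pair_sign S i j) = pair_sign S i j"
  by (simp add: pair_sign_def)

lemma pair_vec_sq: "pair_vec S i j x * cnj (pair_vec S i j x) = (if x = i then 1 else 0) + (if x = j then 1 else 0)"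
proof -
  have "(1 + \<i>) * cnj (1 + \<i>) = (2::complex)" by (simp add: complex_eq_iff)
  then show ?thesis by (auto simp: pair_vec_def pair_sign_sq)
qed

lemma pair_vec_off_diag:
  assumes "x \<noteq> y"
  shows "pair_vec S i j x * cnj (pair_vec S i j y) =
     (if i = x \<and> j = y then pair_sign S x y else 0) + (if i = y \<and> j = x then pair_sign S y x else 0)"
  using assms by (auto simp: pair_vec_def cnj_pair_sign)

definition pair_gram :: "nat \<Rightarrow> (nat \<times> nat) set \<Rightarrow> nat \<Rightarrow> nat \<Rightarrow> complex" where
  "pair_gram n S x y = (\<Sum>i<n. \<Sum>j<n. pair_vec S i j x * cnj (pair_vec S i j y))"

lemma pair_gram_diag:
  assumes "x < n"
  shows "pair_gram n S x x = 2 * of_nat n"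
proof -
  have "pair_gram n S x x = (\<Sum>i<n. \<Sum>j<n. (if x = i then 1 else 0) + (if x = j then 1 else 0))"
    by (simp add: pair_gram_def pair_vec_sq)
  also have "\<dots> = (\<Sum>i<n. (if x = i then of_nat n else 0) + 1)"
    using assms by (intro sum.cong refl) (simp add: sum.distrib)
  finally show ?thesis using assms by (simp add: sum.distrib)
qed

lemma pair_gram_off_diag:
  assumes "x < n" "y < n" "x \<noteq> y"
  shows "pair_gram n S x y = 2 * pair_sign S x y"
proof -
  have "pair_gram n S x y = (\<Sum>i<n. \<Sum>j<n. (if i = x \<and> j = y then pair_sign S x y else 0) + (if i = y \<and> j = x then pair_sign S y x else 0))"
    unfolding pair_gram_def using pair_vec_off_diag[OF assms(3)] by simp
  also have "\<dots> = (\<Sum>i<n. (if i = x then pair_sign S x y else 0) + (if i = y then pair_sign S y x else 0))"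
    using assms by (intro sum.cong refl) (simp add: sum.distrib)
  also have "\<dots> = pair_sign S x y + pair_sign S y x" using assms by (simp add: sum.distrib)
  finally show ?thesis by (simp add: pair_sign_sym)
qed

text \<open>Amplitudes of the form \<open>(1 + \<i>) / m\<close> have squared modulus \<open>2/m\<^sup>2\<close>, which avoids square
  roots in the Kraus operators.\<close>

definition prepare_amp :: "nat \<Rightarrow> complex" where
  "prepare_amp n = (1 + \<i>) / (2 * of_nat n)"

lemma prepare_amp_sq: "0 < n \<Longrightarrow> prepare_amp n * cnj (prepare_amp n) = 1 / (2 * of_nat n * of_nat n)"
  by (simp add: prepare_amp_def complex_eq_iff field_simps power2_eq_square)

definition half_amp :: complex where "half_amp = (1 + \<i>) / 2"

lemma half_amp_sq: "half_amp * cnj half_amp = 1 / 2"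
  by (simp add: half_amp_def complex_eq_iff)

text \<open>\<open>prepare_channel n S\<close> replaces any state by \<open>(1/2n\<^sup>2) \<Sum>\<^sub>i\<^sub>j |\<psi>\<^sub>i\<^sub>j\<rangle>\<langle>\<psi>\<^sub>i\<^sub>j|\<close> with
  \<open>\<psi>\<^sub>i\<^sub>j = pair_vec S i j\<close>.\<close>

definition prepare_kraus :: "nat \<Rightarrow> (nat \<times> nat) set \<Rightarrow> nat \<times> nat \<times> nat \<Rightarrow> cmat" where
  "prepare_kraus n S = (\<lambda>(l, i, j) x p. prepare_amp n * pair_vec S i j x * (if p = l then 1 else 0))"

definition prepare_channel :: "nat \<Rightarrow> (nat \<times> nat) set \<Rightarrow> cmat \<Rightarrow> cmat" where
  "prepare_channel n S = kraus_map n ({..<n} \<times> {..<n} \<times> {..<n}) (prepare_kraus n S)"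

lemma prepare_kraus_complete:
  assumes "0 < n" "p < n" "q < n"
  shows "(\<Sum>k\<in>{..<n} \<times> {..<n} \<times> {..<n}. \<Sum>x<n. prepare_kraus n S k x p * cnj (prepare_kraus n S k x q)) = (if p = q then 1 else 0)"
proof -
  have "(\<Sum>k\<in>{..<n} \<times> {..<n} \<times> {..<n}. \<Sum>x<n. prepare_kraus n S k x p * cnj (prepare_kraus n S k x q))
     = (\<Sum>l<n. \<Sum>i<n. \<Sum>j<n. \<Sum>x<n. (if p = l \<and> q = l then prepare_amp n * cnj (prepare_amp n) else 0) * (pair_vec S i j x * cnj (pair_vec S i j x)))"
    unfolding sum.cartesian_product' by (intro sum.cong refl) (auto simp: prepare_kraus_def)
  also have "\<dots> = (\<Sum>l<n. (if p = l \<and> q = l then prepare_amp n * cnj (prepare_amp n) else 0) * (\<Sum>i<n. \<Sum>j<n. \<Sum>x<n. pair_vec S i j x * cnj (pair_vec S i j x)))"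
    by (simp add: sum_distrib_left)
  also have "(\<Sum>i<n. \<Sum>j<n. \<Sum>x<n. pair_vec S i j x * cnj (pair_vec S i j x)) = (\<Sum>i<n. \<Sum>j<n. (2::complex))"
    unfolding pair_vec_sq by (intro sum.cong refl) (simp add: sum.distrib)
  also have "\<dots> = 2 * of_nat n * of_nat n" by simp
  also have "(\<Sum>l<n. (if p = l \<and> q = l then prepare_amp n * cnj (prepare_amp n) else 0) * (2 * of_nat n * of_nat n))
      = (\<Sum>l<n. if l = p then (if p = q then prepare_amp n * cnj (prepare_amp n) * (2 * of_nat n * of_nat n) else 0) else 0)"
    by (rule sum.cong) auto
  also have "\<dots> = (if p = q then prepare_amp n * cnj (prepare_amp n) * (2 * of_nat n * of_nat n) else 0)"
    using assms(2) by simp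
  also have "\<dots> = (if p = q then 1 else 0)"
    using assms(1) by (simp add: prepare_amp_sq)
  finally show ?thesis .
qed

lemma cptp_prepare_channel: "0 < n \<Longrightarrow> cptp n (prepare_channel n S)"
  unfolding prepare_channel_def by (rule cptp_kraus_map) (simp_all add: prepare_kraus_complete)

lemma prepare_channel_proj0:
  assumes "0 < n"
  shows "prepare_channel n S proj0 x y = prepare_amp n * cnj (prepare_amp n) * pair_gram n S x y"
proof -
  have "prepare_channel n S proj0 x y
      = (\<Sum>k\<in>{..<n} \<times> {..<n} \<times> {..<n}. prepare_kraus n S k x 0 * cnj (prepare_kraus n S k y 0))"
    unfolding prepare_channel_def kraus_map_def using sum_proj0[OF assms] by simp
  also have "\<dots> = (\<Sum>l<n. \<Sum>i<n. \<Sum>j<n. if l = 0 then prepare_amp n * cnj (prepare_amp n) * (pair_vec S i j x * cnj (pair_vec S i j y)) else 0)"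
    unfolding sum.cartesian_product' by (intro sum.cong refl) (auto simp: prepare_kraus_def mult_ac)
  also have "\<dots> = (\<Sum>l<n. if l = 0 then prepare_amp n * cnj (prepare_amp n) * pair_gram n S x y else 0)"
    unfolding pair_gram_def by (intro sum.cong refl) (simp add: sum_distrib_left)
  also have "\<dots> = prepare_amp n * cnj (prepare_amp n) * pair_gram n S x y"
    using assms by simp
  finally show ?thesis .
qed

definition pair_sum_vec :: "nat \<Rightarrow> nat \<Rightarrow> nat \<Rightarrow> complex" where
  "pair_sum_vec a b p = (if p = a then 1 else 0) + (if p = b then 1 else 0)"
definition pair_diff_vec :: "nat \<Rightarrow> nat \<Rightarrow> nat \<Rightarrow> complex" where
  "pair_diff_vec a b p = (if p = a then 1 else 0) - (if p = b then 1 else 0)"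

text \<open>\<open>test_channel n a b\<close> moves the component along \<open>e\<^sub>a + e\<^sub>b\<close> to \<open>|0\<rangle>\<close> and everything
  else to \<open>|1\<rangle>\<close>.\<close>

definition test_vec :: "nat \<Rightarrow> nat \<Rightarrow> nat \<Rightarrow> nat \<Rightarrow> complex" where
  "test_vec a b k = (if k = a then (\<lambda>p. half_amp * pair_sum_vec a b p)
                     else if k = b then (\<lambda>p. half_amp * pair_diff_vec a b p)
                     else (\<lambda>p. if p = k then 1 else 0))"

definition test_kraus :: "nat \<Rightarrow> nat \<Rightarrow> nat \<Rightarrow> cmat" where
  "test_kraus a b k x p = (if x = (if k = a then 0 else 1) then test_vec a b k p else 0)"

definition test_channel :: "nat \<Rightarrow> nat \<Rightarrow> nat \<Rightarrow> cmat \<Rightarrow> cmat" where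
  "test_channel n a b = kraus_map n {..<n} (test_kraus a b)"

lemma test_kraus_complete:
  assumes "a < n" "b < n" "a \<noteq> b" "2 \<le> n" "p < n" "q < n"
  shows "(\<Sum>k\<in>{..<n}. \<Sum>x<n. test_kraus a b k x p * cnj (test_kraus a b k x q)) = (if p = q then 1 else 0)"
proof -
  have "(\<Sum>x<n. test_kraus a b k x p * cnj (test_kraus a b k x q)) = test_vec a b k p * cnj (test_vec a b k q)"
    for k
  proof -
    have "test_kraus a b k x p * cnj (test_kraus a b k x q)
        = (if x = (if k = a then 0 else 1) then test_vec a b k p * cnj (test_vec a b k q) else 0)" for x
      by (simp add: test_kraus_def)
    then show ?thesis using assms(4) by simp
  qed
  moreover have "test_vec a b k p * cnj (test_vec a b k q)
      = (if k = a then half_amp * cnj half_amp * (pair_sum_vec a b p * cnj (pair_sum_vec a b q)) else 0)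
      + (if k = b then half_amp * cnj half_amp * (pair_diff_vec a b p * cnj (pair_diff_vec a b q)) else 0)
      + (if k = p \<and> p \<noteq> a \<and> p \<noteq> b \<and> q = p then 1 else 0)" for k
    using assms(3) by (auto simp: test_vec_def mult_ac)
  ultimately have "(\<Sum>k\<in>{..<n}. \<Sum>x<n. test_kraus a b k x p * cnj (test_kraus a b k x q))
     = half_amp * cnj half_amp * (pair_sum_vec a b p * cnj (pair_sum_vec a b q) + pair_diff_vec a b p * cnj (pair_diff_vec a b q))
       + (if p \<noteq> a \<and> p \<noteq> b \<and> q = p then 1 else 0)"
    using assms by (simp add: sum.distrib distrib_left)
  also have "\<dots> = (if p = q then 1 else 0)"
    unfolding half_amp_sq using assms(3) by (auto simp: pair_sum_vec_def pair_diff_vec_def)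
  finally show ?thesis .
qed

lemma cptp_test_channel: "a < n \<Longrightarrow> b < n \<Longrightarrow> a \<noteq> b \<Longrightarrow> 2 \<le> n \<Longrightarrow> cptp n (test_channel n a b)"
  unfolding test_channel_def by (rule cptp_kraus_map) (simp_all add: test_kraus_complete)

lemma sum_pair_indicator:
  fixes a b n :: nat
  assumes "a < n" "b < n" "a \<noteq> b"
  shows "(\<Sum>p<n. ((if p = a then 1 else 0) + (if p = b then 1 else 0)) * h p) = h a + (h b :: complex)"
proof -
  have "(\<Sum>p<n. ((if p = a then 1 else 0) + (if p = b then 1 else 0)) * h p)
      = (\<Sum>p<n. (if p = a then h p else 0) + (if p = b then h p else 0))"
    by (rule sum.cong) auto
  also have "\<dots> = h a + h b" using assms by (simp add: sum.distrib)
  finally show ?thesis .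
qed

lemma cnj_pair_sum_vec: "cnj (pair_sum_vec a b q) = pair_sum_vec a b q"
  by (simp add: pair_sum_vec_def)

lemma test_kraus_row0:
  assumes "a \<noteq> b"
  shows "test_kraus a b k 0 p = (if k = a then half_amp * pair_sum_vec a b p else 0)"
  using assms by (simp add: test_kraus_def test_vec_def)

lemma test_channel_00:
  assumes "a < n" "b < n" "a \<noteq> b" "2 \<le> n"
  shows "test_channel n a b Y 0 0 = half_amp * cnj half_amp * (Y a a + Y a b + Y b a + Y b b)"
proof -
  have "test_channel n a b Y 0 0 = (\<Sum>k<n. if k = a then (\<Sum>p<n. \<Sum>q<n. half_amp * pair_sum_vec a b p * Y p q * cnj (half_amp * pair_sum_vec a b q)) else 0)"
    unfolding test_channel_def kraus_map_def test_kraus_row0[OF assms(3)] by (intro sum.cong refl) auto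
  also have "\<dots> = (\<Sum>p<n. \<Sum>q<n. half_amp * pair_sum_vec a b p * Y p q * cnj (half_amp * pair_sum_vec a b q))" using assms by simp
  also have "\<dots> = half_amp * cnj half_amp * (\<Sum>p<n. pair_sum_vec a b p * (\<Sum>q<n. pair_sum_vec a b q * Y p q))"
    by (simp add: sum_distrib_left cnj_pair_sum_vec mult_ac)
  also have "\<dots> = half_amp * cnj half_amp * ((Y a a + Y a b) + (Y b a + Y b b))"
    unfolding pair_sum_vec_def using sum_pair_indicator[OF assms(1-3)] by simp
  finally show ?thesis by (simp add: add.assoc)
qed

lemma accept_prepare_test:
  assumes "a < b" "b < n" "2 \<le> n"
  shows "Re (ctrace n (cmat_mult n proj0 (test_channel n a b (prepare_channel n S proj0))))
       = (real n + (if (a, b) \<in> S then 1 else -1)) / (real n)^2"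
proof -
  have n0: "0 < n" using assms by auto
  have ab: "a < n" "a \<noteq> b" using assms by auto
  have "ctrace n (cmat_mult n proj0 (test_channel n a b (prepare_channel n S proj0)))
      = half_amp * cnj half_amp * (prepare_amp n * cnj (prepare_amp n)) * (pair_gram n S a a + pair_gram n S a b + pair_gram n S b a + pair_gram n S b b)"
    using test_channel_00[OF ab(1) assms(2) ab(2) assms(3)] ctrace_mult_proj0[OF n0] prepare_channel_proj0[OF n0]
    by (simp add: algebra_simps)
  also have "\<dots> = (1/2) * (1 / (2 * of_nat n * of_nat n)) * (4 * of_nat n + 4 * pair_sign S a b)"
    using pair_gram_diag[of a n S] pair_gram_diag[of b n S] pair_gram_off_diag[of a n b S] pair_gram_off_diag[of b n a S] ab assms n0
    by (simp add: half_amp_sq prepare_amp_sq pair_sign_sym algebra_simps)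
  also have "\<dots> = (of_nat n + pair_sign S a b) / (of_nat n)^2"
    using n0 by (simp add: field_simps power2_eq_square)
  finally have "ctrace n (cmat_mult n proj0 (test_channel n a b (prepare_channel n S proj0))) = (of_nat n + pair_sign S a b) / (of_nat n)^2" .
  moreover have "pair_sign S a b = (if (a, b) \<in> S then 1 else -1)"
    using assms by (simp add: pair_sign_def min_def max_def)
  ultimately show ?thesis by (simp add: power2_eq_square)
qed

definition separating_channels :: "nat \<Rightarrow> (nat \<Rightarrow> (nat \<times> nat) set) \<Rightarrow> nat \<Rightarrow> cmat \<Rightarrow> cmat" where
  "separating_channels n g \<sigma> =
     (if \<sigma> < n * n then test_channel n (\<sigma> div n) (\<sigma> mod n) else prepare_channel n (g (\<sigma> - n * n)))"

lemma pair_code: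
  fixes a b n :: nat
  assumes "a < n" "b < n"
  shows "a * n + b < n * n" "(a * n + b) div n = a" "(a * n + b) mod n = b"
proof -
  have "a * n + b < Suc a * n" using assms(2) by simp
  also have "\<dots> \<le> n * n" using assms(1) by (intro mult_right_mono) auto
  finally show "a * n + b < n * n" .
  show "(a * n + b) div n = a" "(a * n + b) mod n = b" using assms by simp_all
qed

lemma cptp_separating_channels:
  assumes "2 \<le> n" "\<sigma> < n * n \<Longrightarrow> \<exists>a b. a < b \<and> b < n \<and> \<sigma> = a * n + b"
  shows "cptp n (separating_channels n g \<sigma>)"
proof (cases "\<sigma> < n * n")
  case True
  then obtain a b where "a < b" "b < n" "\<sigma> = a * n + b" using assms(2) by blast
  then show ?thesis
    using pair_code[of a n b] assms(1) by (simp add: separating_channels_def cptp_test_channel)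
next
  case False
  then show ?thesis using assms(1) by (simp add: separating_channels_def cptp_prepare_channel)
qed

lemma separating_word_accepted:
  assumes "a < b" "b < n" "2 \<le> n"
  shows "gqfa_prob n proj0 (separating_channels n g) proj0 [n * n + t, a * n + b] > 1 / real n
     \<longleftrightarrow> (a, b) \<in> g t"
proof -
  have "0 < n" using assms(3) by simp
  have "gqfa_prob n proj0 (separating_channels n g) proj0 [n * n + t, a * n + b]
      = (real n + (if (a, b) \<in> g t then 1 else -1)) / (real n)\<^sup>2"
    using accept_prepare_test[OF assms, of "g t"] pair_code[of a n b] assms
    by (simp add: gqfa_prob_def separating_channels_def)
  moreover have "1 / real n = real n / (real n)\<^sup>2" using \<open>0 < n\<close> by (simp add: power2_eq_square)
  ultimately show ?thesis
    using \<open>0 < n\<close> by (simp add: divide_less_cancel)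
qed

lemma gqfa_separating_family:
  assumes "2 \<le> n" "I \<subseteq> {(a, b). a < b \<and> b < n}"
  obtains Alph E pre suf where "finite Alph" "is_gqfa n Alph proj0 E proj0"
    "\<And>S. S \<subseteq> I \<Longrightarrow> pre S \<in> Alph" "\<And>p. p \<in> I \<Longrightarrow> suf p \<in> Alph"
    "\<And>S p. S \<subseteq> I \<Longrightarrow> p \<in> I \<Longrightarrow> [pre S, suf p] \<in> gqfa_lang n Alph proj0 E proj0 (1 / real n) \<longleftrightarrow> p \<in> S"
proof -
  have "0 < n" using assms(1) by simp
  have "finite I" using assms(2) by (intro finite_subset[of I "{..<n} \<times> {..<n}"]) auto
  obtain g where g: "bij_betw g {..<card (Pow I)} (Pow I)"
    using ex_bij_betw_nat_finite[of "Pow I"] \<open>finite I\<close> by (auto simp: atLeast0LessThan)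
  define suf where "suf p = fst p * n + snd p" for p :: "nat \<times> nat"
  define pre where "pre S = n * n + inv_into {..<card (Pow I)} g S" for S
  define Alph where "Alph = suf ` I \<union> {n * n..<n * n + card (Pow I)}"
  have pre: "pre S \<in> Alph" "g (pre S - n * n) = S" if "S \<subseteq> I" for S
    using that bij_betw_inv_into_right[OF g] inv_into_into[of S g "{..<card (Pow I)}"] g
    by (auto simp: pre_def Alph_def bij_betw_def)
  have suf: "suf p \<in> Alph" if "p \<in> I" for p
    using that by (simp add: Alph_def)
  have "is_gqfa n Alph proj0 (separating_channels n g) proj0"
    unfolding is_gqfa_def
  proof (intro conjI ballI density_proj0 projector_proj0 cptp_separating_channels assms(1) \<open>0 < n\<close>)
    show "\<exists>a b. a < b \<and> b < n \<and> \<sigma> = a * n + b" if "\<sigma> \<in> Alph" "\<sigma> < n * n" for \<sigma>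
    proof -
      have "\<sigma> \<in> suf ` I" using that by (auto simp: Alph_def)
      then obtain p where "p \<in> I" "\<sigma> = suf p" by blast
      then show ?thesis
        using assms(2) by (intro exI[of _ "fst p"] exI[of _ "snd p"]) (auto simp: suf_def)
    qed
  qed
  moreover have "[pre S, suf p] \<in> gqfa_lang n Alph proj0 (separating_channels n g) proj0 (1 / real n)
      \<longleftrightarrow> p \<in> S" if "S \<subseteq> I" "p \<in> I" for S p
    using separating_word_accepted[of "fst p" "snd p" n g "inv_into {..<card (Pow I)} g S"]
      pre[OF that(1)] suf[OF that(2)] that assms
    by (auto simp: gqfa_lang_def pre_def suf_def)
  moreover have "finite Alph" using \<open>finite I\<close> by (simp add: Alph_def)
  ultimately show ?thesis using that pre suf by blast
qed

section \<open>Shattering bound for PFAs\<close>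

lemma sum_eliminate_pivot:
  fixes b :: "'a \<Rightarrow> nat \<Rightarrow> real"
  assumes "finite I" "p0 \<in> I" "b p0 k \<noteq> 0"
  shows "(\<Sum>p\<in>I. (if p = p0 then - (\<Sum>q\<in>I - {p0}. c q * b q k) / b p0 k else c p) * b p i)
       = (\<Sum>p\<in>I - {p0}. c p * (b p i - b p k / b p0 k * b p0 i))"
proof -
  have "(\<Sum>p\<in>I. (if p = p0 then - (\<Sum>q\<in>I - {p0}. c q * b q k) / b p0 k else c p) * b p i)
      = - (\<Sum>q\<in>I - {p0}. c q * b q k) / b p0 k * b p0 i + (\<Sum>p\<in>I - {p0}. c p * b p i)"
    using assms(1,2) by (simp add: sum.remove)
  then show ?thesis
    by (simp add: algebra_simps sum_subtractf sum_distrib_left sum_divide_distrib)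
qed

lemma exists_nontrivial_linear_relation:
  fixes b :: "'a \<Rightarrow> nat \<Rightarrow> real"
  assumes "finite I" "k < card I"
  shows "\<exists>c. (\<exists>p\<in>I. c p \<noteq> 0) \<and> (\<forall>i<k. (\<Sum>p\<in>I. c p * b p i) = 0)"
  using assms
proof (induction k arbitrary: I b)
  case 0
  then obtain p0 where "p0 \<in> I" by fastforce
  then show ?case by (intro exI[of _ "\<lambda>p. if p = p0 then 1 else 0"]) auto
next
  case (Suc k)
  show ?case
  proof (cases "\<forall>p\<in>I. b p k = 0")
    case True
    then show ?thesis using Suc.IH[of I b] Suc.prems by (auto simp: less_Suc_eq)
  next
    case False
    then obtain p0 where p0: "p0 \<in> I" "b p0 k \<noteq> 0" by blast
    have "finite (I - {p0})" "k < card (I - {p0})" using Suc.prems p0(1) by auto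
    then obtain c where c: "\<exists>p\<in>I - {p0}. c p \<noteq> 0"
      "\<forall>i<k. (\<Sum>p\<in>I - {p0}. c p * (b p i - b p k / b p0 k * b p0 i)) = 0"
      using Suc.IH[of "I - {p0}" "\<lambda>p i. b p i - b p k / b p0 k * b p0 i"] by blast
    define c' where "c' p = (if p = p0 then - (\<Sum>q\<in>I - {p0}. c q * b q k) / b p0 k else c p)" for p
    have "(\<Sum>p\<in>I. c' p * b p i) = (\<Sum>p\<in>I - {p0}. c p * (b p i - b p k / b p0 k * b p0 i))" for i
      unfolding c'_def using Suc.prems(1) p0 by (rule sum_eliminate_pivot)
    moreover have "(\<Sum>p\<in>I - {p0}. c p * (b p i - b p k / b p0 k * b p0 i)) = 0" if "i < Suc k" for i
      using c(2) that p0(2) by (cases "i = k") auto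
    moreover have "\<exists>p\<in>I. c' p \<noteq> 0" using c(1) by (auto simp: c'_def)
    ultimately show ?thesis by metis
  qed
qed

lemma exists_positive_linear_relation:
  fixes b :: "'a \<Rightarrow> nat \<Rightarrow> real"
  assumes "finite I" "k < card I"
  shows "\<exists>c. (\<exists>p\<in>I. 0 < c p) \<and> (\<forall>i<k. (\<Sum>p\<in>I. c p * b p i) = 0)"
proof -
  obtain c where c: "\<exists>p\<in>I. c p \<noteq> 0" "\<forall>i<k. (\<Sum>p\<in>I. c p * b p i) = 0"
    using exists_nontrivial_linear_relation[OF assms] by blast
  show ?thesis
  proof (cases "\<exists>p\<in>I. 0 < c p")
    case False
    then have "\<exists>p\<in>I. 0 < - c p" using c(1) by force
    moreover have "\<forall>i<k. (\<Sum>p\<in>I. - c p * b p i) = 0" using c(2) by (simp add: sum_negf)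
    ultimately show ?thesis by (intro exI[of _ "\<lambda>p. - c p"]) blast
  qed (use c in blast)
qed

theorem shattered_card_le_dim:
  fixes \<alpha> :: "'a set \<Rightarrow> nat \<Rightarrow> real" and \<beta> :: "'a \<Rightarrow> nat \<Rightarrow> real"
  assumes "finite I"
    and shatter: "\<And>S p. S \<subseteq> I \<Longrightarrow> p \<in> I \<Longrightarrow> (\<Sum>i<k. \<alpha> S i * \<beta> p i) > 0 \<longleftrightarrow> p \<in> S"
  shows "card I \<le> k"
proof (rule ccontr)
  assume "\<not> card I \<le> k"
  then obtain c where c: "\<exists>p\<in>I. 0 < c p" "\<forall>i<k. (\<Sum>p\<in>I. c p * \<beta> p i) = 0"
    using exists_positive_linear_relation[OF assms(1), of k \<beta>] by auto
  define S where "S = {p \<in> I. 0 < c p}"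
  have "S \<subseteq> I" by (auto simp: S_def)
  have "(\<Sum>p\<in>I. c p * (\<Sum>i<k. \<alpha> S i * \<beta> p i)) = (\<Sum>i<k. \<alpha> S i * (\<Sum>p\<in>I. c p * \<beta> p i))"
    by (simp add: sum_distrib_left sum.swap[of _ I] mult_ac)
  also have "\<dots> = 0" using c(2) by simp
  finally have zero: "(\<Sum>p\<in>I. c p * (\<Sum>i<k. \<alpha> S i * \<beta> p i)) = 0" .
  have "0 \<le> c p * (\<Sum>i<k. \<alpha> S i * \<beta> p i)" if "p \<in> I" for p
    using shatter[OF \<open>S \<subseteq> I\<close> that] that
    by (cases "0 < c p") (auto simp: S_def intro: mult_nonpos_nonpos)
  moreover obtain p0 where "p0 \<in> I" "0 < c p0" using c(1) by blast
  moreover have "0 < c p0 * (\<Sum>i<k. \<alpha> S i * \<beta> p0 i)"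
    using shatter[OF \<open>S \<subseteq> I\<close> \<open>p0 \<in> I\<close>] \<open>p0 \<in> I\<close> \<open>0 < c p0\<close> by (simp add: S_def)
  ultimately have "0 < (\<Sum>p\<in>I. c p * (\<Sum>i<k. \<alpha> S i * \<beta> p i))"
    using assms(1) by (intro sum_pos2) auto
  then show False using zero by simp
qed

lemma pfa_prob_two_letters:
  assumes "is_pfa k Alph ini T Te F" "x \<in> Alph"
  shows "pfa_prob k ini T Te F [x, y] - \<mu> =
    (\<Sum>i<k. vec_mat k ini (T x) i * ((\<Sum>j\<in>F. \<Sum>l<k. T y i l * Te l j) - \<mu>))"
proof -
  define v where "v = vec_mat k ini (T x)"
  have "(\<Sum>i<k. v i) = (\<Sum>i<k. ini i)"
    unfolding v_def sum_vec_mat using assms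
    by (intro sum.cong refl) (simp add: is_pfa_def stoch_mat_def stoch_vec_def)
  then have v_sum: "(\<Sum>i<k. v i) = 1"
    using assms(1) by (simp add: is_pfa_def stoch_vec_def)
  have "pfa_prob k ini T Te F [x, y] = (\<Sum>j\<in>F. \<Sum>l<k. \<Sum>i<k. v i * T y i l * Te l j)"
    by (simp add: pfa_prob_vec_run v_def vec_mat_def sum_distrib_right)
  also have "\<dots> = (\<Sum>j\<in>F. \<Sum>i<k. \<Sum>l<k. v i * (T y i l * Te l j))"
    by (rule sum.cong[OF refl]) (subst sum.swap, simp add: mult.assoc)
  also have "\<dots> = (\<Sum>i<k. v i * (\<Sum>j\<in>F. \<Sum>l<k. T y i l * Te l j))"
    by (subst sum.swap) (simp add: sum_distrib_left)
  finally have "pfa_prob k ini T Te F [x, y] - \<mu> = (\<Sum>i<k. v i * (\<Sum>j\<in>F. \<Sum>l<k. T y i l * Te l j)) - \<mu> * (\<Sum>i<k. v i)"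
    using v_sum by simp
  then show ?thesis
    by (simp add: v_def right_diff_distrib sum_subtractf sum_distrib_left mult.commute)
qed

lemma pfa_separating_family_card_le:
  assumes "is_pfa k Alph ini T Te F" "finite I"
    and "\<And>S. S \<subseteq> I \<Longrightarrow> pre S \<in> Alph" "\<And>p. p \<in> I \<Longrightarrow> suf p \<in> Alph"
    and "\<And>S p. S \<subseteq> I \<Longrightarrow> p \<in> I \<Longrightarrow> [pre S, suf p] \<in> pfa_lang k Alph ini T Te F \<mu> \<longleftrightarrow> p \<in> S"
  shows "card I \<le> k"
proof (rule shattered_card_le_dim[OF assms(2)])
  fix S p assume "S \<subseteq> I" "p \<in> I"
  then have "pfa_prob k ini T Te F [pre S, suf p] - \<mu> > 0 \<longleftrightarrow> p \<in> S"
    using assms(3-5) by (simp add: pfa_lang_def)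
  then show "(\<Sum>i<k. vec_mat k ini (T (pre S)) i * ((\<Sum>j\<in>F. \<Sum>l<k. T (suf p) i l * Te l j) - \<mu>)) > 0
      \<longleftrightarrow> p \<in> S"
    by (simp only: pfa_prob_two_letters[OF assms(1) assms(3)[OF \<open>S \<subseteq> I\<close>]])
qed

section \<open>The simulation cost\<close>

theorem simulates_all_upper: "simulates_all n (2 * (n * n) + 2)"
  unfolding simulates_all_def
proof (intro allI impI)
  fix Alph \<rho>0 E Pacc and lam :: real
  assume H: "finite Alph \<and> is_gqfa n Alph \<rho>0 E Pacc \<and> 0 \<le> lam \<and> lam < 1"
  define \<eta> where "\<eta> s = Re (ctrace n (cmat_mult n Pacc (cmat_unit n s))) - lam * Re (ctrace n (cmat_unit n s))" for s
  obtain ini T Te F \<mu> where P: "is_pfa (2 * (n * n) + 2) Alph ini T Te F" "0 \<le> \<mu>" "\<mu> < 1"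
    and acc: "\<forall>w. pfa_prob (2 * (n * n) + 2) ini T Te F w > \<mu> \<longleftrightarrow>
       (\<Sum>s<2 * (n * n). vec_run (2 * (n * n)) (channel_coord_matrix n E) (cmat_coord n \<rho>0) w s * \<eta> s) > 0"
    using turakainen[of Alph "2 * (n * n)" "channel_coord_matrix n E" "cmat_coord n \<rho>0" \<eta>] H by auto
  have "pfa_prob (2 * (n * n) + 2) ini T Te F w > \<mu> \<longleftrightarrow> gqfa_prob n \<rho>0 E Pacc w > lam"
    if "set w \<subseteq> Alph" for w
  proof -
    have "gqfa_prob n \<rho>0 E Pacc w - lam
        = (\<Sum>s<2 * (n * n). vec_run (2 * (n * n)) (channel_coord_matrix n E) (cmat_coord n \<rho>0) w s * \<eta> s)"
      using gqfa_prob_minus_cutpoint[of n Alph \<rho>0 E Pacc w lam] H that by (simp add: \<eta>_def)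
    with acc show ?thesis by (metis diff_gt_0_iff_gt)
  qed
  then have "pfa_lang (2 * (n * n) + 2) Alph ini T Te F \<mu> = gqfa_lang n Alph \<rho>0 E Pacc lam"
    by (auto simp: pfa_lang_def gqfa_lang_def)
  then show "\<exists>k ini T Te F \<mu>. k \<le> 2 * (n * n) + 2 \<and> is_pfa k Alph ini T Te F \<and> 0 \<le> \<mu> \<and> \<mu> < 1 \<and>
            pfa_lang k Alph ini T Te F \<mu> = gqfa_lang n Alph \<rho>0 E Pacc lam"
    using P by blast
qed

theorem simulates_all_lower:
  assumes "2 \<le> n" "simulates_all n m" "I \<subseteq> {(a, b). a < b \<and> b < n}"
  shows "card I \<le> m"
proof -
  obtain Alph E pre suf where "finite Alph" "is_gqfa n Alph proj0 E proj0"
    and letters: "\<And>S. S \<subseteq> I \<Longrightarrow> pre S \<in> Alph" "\<And>p. p \<in> I \<Longrightarrow> suf p \<in> Alph"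
    and lang: "\<And>S p. S \<subseteq> I \<Longrightarrow> p \<in> I \<Longrightarrow>
      [pre S, suf p] \<in> gqfa_lang n Alph proj0 E proj0 (1 / real n) \<longleftrightarrow> p \<in> S"
    using gqfa_separating_family[OF assms(1,3)] by blast
  moreover have "0 \<le> 1 / real n" "1 / real n < 1" using assms(1) by simp_all
  ultimately obtain k ini T Te F \<mu> where "k \<le> m" "is_pfa k Alph ini T Te F"
    and "pfa_lang k Alph ini T Te F \<mu> = gqfa_lang n Alph proj0 E proj0 (1 / real n)"
    using assms(2)[unfolded simulates_all_def, rule_format, of Alph proj0 E proj0 "1 / real n"] by blast
  moreover have "finite I"
    using assms(3) by (intro finite_subset[of I "{..<n} \<times> {..<n}"]) auto
  ultimately have "card I \<le> k"
    using letters lang by (intro pfa_separating_family_card_le[of k Alph ini T Te F I pre suf \<mu>]) simp_all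
  with \<open>k \<le> m\<close> show ?thesis by simp
qed

lemma square_le_8_mult_halves:
  fixes n :: nat
  assumes "2 \<le> n"
  shows "n * n \<le> 8 * ((n div 2) * (n - n div 2))"
proof -
  have "n * n \<le> (4 * (n div 2)) * (2 * (n - n div 2))"
    using assms by (intro mult_le_mono) linarith+
  then show ?thesis by simp
qed

lemma s_cost_bounds:
  assumes "2 \<le> n"
  shows "n * n \<le> 8 * s_cost n" "s_cost n \<le> 2 * (n * n) + 2"
proof -
  show "s_cost n \<le> 2 * (n * n) + 2"
    unfolding s_cost_def by (rule Least_le) (rule simulates_all_upper)
  have "simulates_all n (s_cost n)"
    unfolding s_cost_def by (rule LeastI) (rule simulates_all_upper)
  then have "card ({..<n div 2} \<times> {n div 2..<n}) \<le> s_cost n"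
    by (rule simulates_all_lower[OF assms]) auto
  then show "n * n \<le> 8 * s_cost n"
    using square_le_8_mult_halves[OF assms] by (simp add: card_cartesian_product)
qed

theorem corollary4p2:
  shows "(\<forall>n\<ge>1. \<exists>m. simulates_all n m) \<and>
         (\<lambda>n. real (s_cost n)) \<in> \<Theta>(\<lambda>n. real n ^ 2)"
proof
  show "\<forall>n\<ge>1. \<exists>m. simulates_all n m" using simulates_all_upper by blast
  have "1 / 8 * (real n)\<^sup>2 \<le> real (s_cost n) \<and> real (s_cost n) \<le> 4 * (real n)\<^sup>2" if "2 \<le> n" for n
  proof -
    have "2 \<le> 2 * (n * n)" using that by (simp add: mult_le_mono)
    then have "n * n \<le> 8 * s_cost n" "s_cost n \<le> 4 * (n * n)" using s_cost_bounds[OF that] by linarith+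
    then show ?thesis unfolding power2_eq_square of_nat_mult[symmetric] by linarith
  qed
  then show "(\<lambda>n. real (s_cost n)) \<in> \<Theta>(\<lambda>n. real n ^ 2)"
    by (intro bigthetaI'[of "1 / 8" 4]) (auto simp: eventually_at_top_linorder)
qed

end
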